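(* Let $U\in\mathbb{R}^{n\times d}$, let $\mathbf{x}_*\in\mathbb{R}^d$ be an $s$-sparse signal, $\mathbf{e}\in\mathbb{R}^n$, and $\mathbf{y}=U\mathbf{x}_*+\mathbf{e}$. Assume \[ \gamma := \delta_s + \sqrt{2}\,\theta_{s,s} + \delta_{3s} < 1 . \] Let $\Delta_1,\Delta_2,\ldots$ be a sequence with $\|\mathbf{x}_1-\mathbf{x}_*\|_2\le\Delta_1$ and $\Delta_{t+1}=\gamma\Delta_t+(1+\sqrt{2})\sqrt{s}\|U^\top\mathbf{e}\|_\infty$ for $t\ge1$. If Algorithm 1 is run with \[ \lambda_t=\frac{\delta_s+\sqrt{2}\theta_{s,s}}{\sqrt{s}}\Delta_t+\|U^\top\mathbf{e}\|_\infty, \] then for all $t\ge0$: (i) $|\mathcal{S}_{t+1}\setminus\mathcal{S}_*|\le s$, and (ii) $\|\mathbf{x}_{t+1}-\mathbf{x}_*\|_2\le\gamma^t\Delta_1+\frac{1-\gamma^t}{1-\gamma}(1+\sqrt{2})\sqrt{s}\|U^\top\mathbf{e}\|_\infty$.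
   Context: For $\mathbf{x}\in\mathbb{R}^d$, $\mathcal{S}(\mathbf{x})=\{i:[\mathbf{x}]_i\neq 0\}$; $\mathbf{x}$ is $s$-sparse if $|\mathcal{S}(\mathbf{x})|\le s$. $U_{\mathcal T}$ is the column submatrix of $U$ indexed by $\mathcal T$. $\delta_s$ is the smallest constant $\ge0$ with $(1-\delta_s)\|\mathbf{v}\|_2^2\le\|U_{\mathcal T}\mathbf{v}\|_2^2\le(1+\delta_s)\|\mathbf{v}\|_2^2$ for all $|\mathcal T|\le s$, $\mathbf{v}\in\mathbb{R}^{|\mathcal T|}$. $\theta_{s,s}$ (with $2s\le d$) is the smallest constant with $|\langle U_{\mathcal T}\mathbf{v},U_{\mathcal T'}\mathbf{v}'\rangle|\le\theta_{s,s}\|\mathbf{v}\|_2\|\mathbf{v}'\|_2$ for all disjoint $\mathcal T,\mathcal T'$ of size at most $s$. Algorithm 1: given $\lambda_1,\lambda_2,\ldots>0$, set $\mathbf{x}_1=0$ and for $t\ge1$, $\widehat{\mathbf{x}}_t=\mathbf{x}_t-U^\top(U\mathbf{x}_t-\mathbf{y})$, $\mathbf{x}_{t+1}=\mathrm{sign}(\widehat{\mathbf{x}}_t)[|\widehat{\mathbf{x}}_t|-\lambda_t]_+$ (componentwise soft-thresholding). $\mathcal{S}_t=\mathcal{S}(\mathbf{x}_t)$, $\mathcal{S}_*=\mathcal{S}(\mathbf{x}_* )$. *)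

theory Defs
  imports "HOL-Analysis.Analysis"
begin

text \<open>Vectors in R^d are real^'d, matrices U in R^(n x d) are real^'d^'n.
  Column submatrices U_T applied to v are represented as U *v w with w supported in T
  (zero extension of v).\<close>

definition supp :: "real^'d \<Rightarrow> 'd set" where
  "supp x = {i. x $ i \<noteq> 0}"

definition linf :: "real^'d \<Rightarrow> real" where
  "linf x = Max (range (\<lambda>i. \<bar>x $ i\<bar>))"

definition rip_const :: "real^'d^'n \<Rightarrow> nat \<Rightarrow> real" where
  "rip_const U s = Inf {\<delta>. \<delta> \<ge> 0 \<and>
     (\<forall>T w. card T \<le> s \<and> supp w \<subseteq> T \<longrightarrow>
        (1 - \<delta>) * (norm w)^2 \<le> (norm (U *v w))^2 \<and>
        (norm (U *v w))^2 \<le> (1 + \<delta>) * (norm w)^2)}"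

definition roc_const :: "real^'d^'n \<Rightarrow> nat \<Rightarrow> real" where
  "roc_const U s = Inf {\<theta>.
     (\<forall>T T' w w'. card T \<le> s \<and> card T' \<le> s \<and> T \<inter> T' = {} \<and>
        supp w \<subseteq> T \<and> supp w' \<subseteq> T' \<longrightarrow>
        \<bar>(U *v w) \<bullet> (U *v w')\<bar> \<le> \<theta> * norm w * norm w')}"

definition soft_thresh :: "real^'d \<Rightarrow> real \<Rightarrow> real^'d" where
  "soft_thresh v l = (\<chi> i. sgn (v $ i) * max (\<bar>v $ i\<bar> - l) 0)"

end

(* Write x_t = x_* + h.  One gradient step produces x_* + (I - U^T U) h + U^T e.  On a set Q of
   at most s coordinates disjoint from S_*, the vector (I - U^T U) h has norm at most
   (delta_s + sqrt 2 theta_{s,s}) |h|: split h into its parts on Q, on S_* and elsewhere.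
   With the threshold lambda_t, every coordinate that enters the support outside S_* carries a
   gradient entry above (delta_s + sqrt 2 theta_{s,s}) Delta_t / sqrt s, so at most s of them
   can enter.  The new error then lives on at most 3s coordinates, where delta_{3s} controls
   (I - U^T U) h, and thresholding adds at most (lambda_t + |U^T e|_inf) sqrt s.  Hence
   |x_{t+1} - x_*| <= Delta_{t+1}, and the affine recurrence for Delta_t is solved explicitly. *)

theory Submission
  imports Defs
begin

lemma supp_zero [simp]: "supp 0 = {}"
  by (simp add: supp_def)

lemma supp_add: "supp (a + b) \<subseteq> supp a \<union> supp b"
  by (auto simp: supp_def)

lemma supp_diff: "supp (a - b) \<subseteq> supp a \<union> supp b"
  by (auto simp: supp_def)

lemma supp_scaleR: "supp (c *\<^sub>R a) \<subseteq> supp a"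
  by (auto simp: supp_def)

lemma inner_eq_zero_if_disjoint_supp: "supp u \<inter> supp v = {} \<Longrightarrow> u \<bullet> v = 0"
  unfolding inner_vec_def by (intro sum.neutral) (auto simp: supp_def)

lemma abs_nth_le_linf: "\<bar>v $ i\<bar> \<le> linf v"
  unfolding linf_def by (rule Max_ge) auto

lemma power2_norm_vec_eq_sum: "(norm (v::real^'d))\<^sup>2 = (\<Sum>i\<in>UNIV. (v $ i)\<^sup>2)"
  by (simp add: norm_vec_def L2_set_def sum_nonneg)

definition restrict_vec :: "'d set \<Rightarrow> real^'d \<Rightarrow> real^'d" where
  "restrict_vec T v = (\<chi> i. if i \<in> T then v $ i else 0)"

lemma restrict_vec_nth [simp]: "restrict_vec T v $ i = (if i \<in> T then v $ i else 0)"
  by (simp add: restrict_vec_def)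

lemma supp_restrict_vec: "supp (restrict_vec T v) \<subseteq> T \<inter> supp v"
  by (auto simp: supp_def)

lemma norm_restrict_vec_sq: "(norm (restrict_vec T v))\<^sup>2 = (\<Sum>i\<in>T. (v $ i)\<^sup>2)"
proof -
  have "(norm (restrict_vec T v))\<^sup>2 = (\<Sum>i\<in>UNIV. if i \<in> T then (v $ i)\<^sup>2 else 0)"
    unfolding power2_norm_vec_eq_sum by (intro sum.cong) auto
  then show ?thesis by (simp add: sum.If_cases)
qed

lemma inner_restrict_vec_self: "restrict_vec T v \<bullet> v = (norm (restrict_vec T v))\<^sup>2"
proof -
  have "restrict_vec T v \<bullet> v = (\<Sum>i\<in>UNIV. if i \<in> T then (v $ i)\<^sup>2 else 0)"
    unfolding inner_vec_def by (intro sum.cong) (auto simp: power2_eq_square)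
  then show ?thesis by (simp add: sum.If_cases norm_restrict_vec_sq)
qed

lemma norm_restrict_vec_const: "norm (restrict_vec T (\<chi> i. a)) = \<bar>a\<bar> * sqrt (card T)"
proof (rule power2_eq_imp_eq)
  show "(norm (restrict_vec T (\<chi> i. a)))\<^sup>2 = (\<bar>a\<bar> * sqrt (card T))\<^sup>2"
    by (simp add: norm_restrict_vec_sq power_mult_distrib)
qed simp_all

definition rip_admissible :: "real^'d^'n \<Rightarrow> nat \<Rightarrow> real \<Rightarrow> bool" where
  "rip_admissible U k \<delta> \<longleftrightarrow> \<delta> \<ge> 0 \<and>
     (\<forall>T w. card T \<le> k \<and> supp w \<subseteq> T \<longrightarrow>
        (1 - \<delta>) * (norm w)\<^sup>2 \<le> (norm (U *v w))\<^sup>2 \<and> (norm (U *v w))\<^sup>2 \<le> (1 + \<delta>) * (norm w)\<^sup>2)"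

definition roc_admissible :: "real^'d^'n \<Rightarrow> nat \<Rightarrow> real \<Rightarrow> bool" where
  "roc_admissible U k \<theta> \<longleftrightarrow>
     (\<forall>T T' w w'. card T \<le> k \<and> card T' \<le> k \<and> T \<inter> T' = {} \<and> supp w \<subseteq> T \<and> supp w' \<subseteq> T' \<longrightarrow>
        \<bar>(U *v w) \<bullet> (U *v w')\<bar> \<le> \<theta> * norm w * norm w')"

lemma rip_const_eq_Inf: "rip_const U k = Inf (Collect (rip_admissible U k))"
  unfolding rip_const_def rip_admissible_def[abs_def] ..

lemma roc_const_eq_Inf: "roc_const U k = Inf (Collect (roc_admissible U k))"
  unfolding roc_const_def roc_admissible_def[abs_def] ..

lemma rip_admissible_exists: "\<exists>\<delta>. rip_admissible (U::real^'d^'n) k \<delta>"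
proof -
  obtain K where K: "\<And>w. norm (U *v w) \<le> norm w * K" "K \<ge> 0"
    using bounded_linear.nonneg_bounded[OF matrix_vector_mul_bounded_linear, of U] by blast
  have "(norm (U *v w))\<^sup>2 \<le> (1 + (K\<^sup>2 + 1)) * (norm w)\<^sup>2" for w :: "real^'d"
  proof -
    have "(norm (U *v w))\<^sup>2 \<le> K\<^sup>2 * (norm w)\<^sup>2"
      using power_mono[OF K(1)[of w]] by (simp add: power_mult_distrib mult.commute)
    then show ?thesis
      by (simp add: algebra_simps add_increasing)
  qed
  moreover have "(1 - (K\<^sup>2 + 1)) * (norm w)\<^sup>2 \<le> (norm (U *v w))\<^sup>2" for w :: "real^'d"
    by (simp add: order_trans[of _ 0])
  ultimately have "rip_admissible U k (K\<^sup>2 + 1)"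
    unfolding rip_admissible_def by simp
  then show ?thesis ..
qed

lemma roc_admissible_exists: "\<exists>\<theta>. roc_admissible (U::real^'d^'n) k \<theta>"
proof -
  obtain K where K: "\<And>w. norm (U *v w) \<le> norm w * K" "K \<ge> 0"
    using bounded_linear.nonneg_bounded[OF matrix_vector_mul_bounded_linear, of U] by blast
  have "\<bar>(U *v w) \<bullet> (U *v w')\<bar> \<le> K\<^sup>2 * norm w * norm w'" for w w' :: "real^'d"
  proof -
    have "\<bar>(U *v w) \<bullet> (U *v w')\<bar> \<le> norm (U *v w) * norm (U *v w')"
      by (rule Cauchy_Schwarz_ineq2)
    also have "\<dots> \<le> (norm w * K) * (norm w' * K)"
      using K by (intro mult_mono) auto
    finally show ?thesis by (simp add: power2_eq_square algebra_simps)
  qed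
  then have "roc_admissible U k (K\<^sup>2)"
    unfolding roc_admissible_def by blast
  then show ?thesis ..
qed

lemma le_cInf_mult:
  fixes S :: "real set"
  assumes "S \<noteq> {}" "0 < b" "\<And>c. c \<in> S \<Longrightarrow> a \<le> c * b"
  shows "a \<le> Inf S * b"
proof -
  have "a / b \<le> Inf S"
    using assms by (intro cInf_greatest) (auto simp: pos_divide_le_eq)
  then show ?thesis
    using assms(2) by (simp add: pos_divide_le_eq)
qed

lemma rip_const_nonneg: "0 \<le> rip_const U k"
  unfolding rip_const_eq_Inf using rip_admissible_exists[of U k]
  by (intro cInf_greatest) (auto simp: rip_admissible_def)

lemma rip_const_norm_sq:
  assumes "card T \<le> k" "supp w \<subseteq> T"
  shows "\<bar>(norm w)\<^sup>2 - (norm (U *v w))\<^sup>2\<bar> \<le> rip_const U k * (norm w)\<^sup>2"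
proof (cases "w = 0")
  case False
  show ?thesis
    unfolding rip_const_eq_Inf
  proof (rule le_cInf_mult)
    show "Collect (rip_admissible U k) \<noteq> {}"
      using rip_admissible_exists by blast
    show "0 < (norm w)\<^sup>2"
      using False by simp
  next
    fix \<delta> assume "\<delta> \<in> Collect (rip_admissible U k)"
    then have "(1 - \<delta>) * (norm w)\<^sup>2 \<le> (norm (U *v w))\<^sup>2 \<and> (norm (U *v w))\<^sup>2 \<le> (1 + \<delta>) * (norm w)\<^sup>2"
      using assms unfolding rip_admissible_def by blast
    then show "\<bar>(norm w)\<^sup>2 - (norm (U *v w))\<^sup>2\<bar> \<le> \<delta> * (norm w)\<^sup>2"
      by (simp add: abs_le_iff algebra_simps)
  qed
qed simp

lemma rip_const_inner_le_mean:
  assumes "card T \<le> k" "supp u \<subseteq> T" "supp v \<subseteq> T"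
  shows "\<bar>u \<bullet> v - (U *v u) \<bullet> (U *v v)\<bar> \<le> rip_const U k * ((norm u)\<^sup>2 + (norm v)\<^sup>2) / 2"
proof -
  let ?\<delta> = "rip_const U k"
  let ?D = "\<lambda>w. (norm w)\<^sup>2 - (norm (U *v w))\<^sup>2"
  have "supp (u + v) \<subseteq> T" "supp (u - v) \<subseteq> T"
    using assms supp_add supp_diff by blast+
  then have p: "\<bar>?D (u + v)\<bar> \<le> ?\<delta> * (norm (u + v))\<^sup>2" and m: "\<bar>?D (u - v)\<bar> \<le> ?\<delta> * (norm (u - v))\<^sup>2"
    using assms(1) by (blast intro: rip_const_norm_sq)+
  have "?D (u + v) - ?D (u - v) = 4 * (u \<bullet> v - (U *v u) \<bullet> (U *v v))"
    by (simp add: power2_norm_eq_inner matrix_vector_right_distrib matrix_vector_mult_diff_distrib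
        inner_add_left inner_add_right inner_diff_left inner_diff_right inner_commute)
  then have "4 * \<bar>u \<bullet> v - (U *v u) \<bullet> (U *v v)\<bar> \<le> \<bar>?D (u + v)\<bar> + \<bar>?D (u - v)\<bar>"
    by (metis abs_mult abs_numeral abs_triangle_ineq4)
  moreover have "?\<delta> * (norm (u + v))\<^sup>2 + ?\<delta> * (norm (u - v))\<^sup>2 = 2 * (?\<delta> * ((norm u)\<^sup>2 + (norm v)\<^sup>2))"
    by (simp add: power2_norm_eq_inner inner_add_left inner_add_right inner_diff_left inner_diff_right
        inner_commute algebra_simps)
  ultimately show ?thesis
    using p m by (simp add: field_simps)
qed

lemma rip_const_inner:
  assumes "card T \<le> k" "supp u \<subseteq> T" "supp v \<subseteq> T"
  shows "\<bar>u \<bullet> v - (U *v u) \<bullet> (U *v v)\<bar> \<le> rip_const U k * norm u * norm v"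
proof (cases "u = 0 \<or> v = 0")
  case False
  then have pos: "0 < norm u" "0 < norm v"
    by auto
  define a where "a = inverse (norm u) *\<^sub>R u"
  define b where "b = inverse (norm v) *\<^sub>R v"
  have "supp a \<subseteq> T" "supp b \<subseteq> T"
    using assms supp_scaleR unfolding a_def b_def by blast+
  moreover have "norm a = 1" "norm b = 1"
    using pos unfolding a_def b_def by simp_all
  ultimately have "\<bar>a \<bullet> b - (U *v a) \<bullet> (U *v b)\<bar> \<le> rip_const U k"
    using rip_const_inner_le_mean[OF assms(1), of a b U] by simp
  moreover have "a \<bullet> b - (U *v a) \<bullet> (U *v b) = (u \<bullet> v - (U *v u) \<bullet> (U *v v)) / (norm u * norm v)"
    unfolding a_def b_def by (simp add: matrix_vector_mult_scaleR divide_inverse right_diff_distrib mult_ac)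
  ultimately show ?thesis
    using pos by (simp add: abs_divide pos_divide_le_eq mult.assoc)
qed auto

lemma roc_const_inner:
  assumes "card T \<le> k" "card T' \<le> k" "T \<inter> T' = {}" "supp w \<subseteq> T" "supp w' \<subseteq> T'"
  shows "\<bar>(U *v w) \<bullet> (U *v w')\<bar> \<le> roc_const U k * norm w * norm w'"
proof (cases "w = 0 \<or> w' = 0")
  case False
  have "\<bar>(U *v w) \<bullet> (U *v w')\<bar> \<le> roc_const U k * (norm w * norm w')"
    unfolding roc_const_eq_Inf
  proof (rule le_cInf_mult)
    show "Collect (roc_admissible U k) \<noteq> {}"
      using roc_admissible_exists by blast
    show "0 < norm w * norm w'"
      using False by simp
  next
    fix \<theta> assume "\<theta> \<in> Collect (roc_admissible U k)"
    then show "\<bar>(U *v w) \<bullet> (U *v w')\<bar> \<le> \<theta> * (norm w * norm w')"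
      using assms unfolding roc_admissible_def by (auto simp: mult.assoc)
  qed
  then show ?thesis
    by (simp add: mult.assoc)
qed auto

lemma roc_const_nonneg:
  assumes "1 \<le> k" "2 \<le> CARD('d)"
  shows "0 \<le> roc_const (U::real^'d^'n) k"
proof -
  obtain i j :: 'd where "i \<noteq> j"
    using assms(2) by (metis One_nat_def card_le_Suc0_iff_eq finite not_less_eq_eq numeral_2_eq_2)
  then have "\<bar>(U *v axis i 1) \<bullet> (U *v axis j 1)\<bar>
      \<le> roc_const U k * norm (axis i (1::real) :: real^'d) * norm (axis j (1::real) :: real^'d)"
    using assms(1) by (intro roc_const_inner[of "{i}" k "{j}"]) (auto simp: supp_def axis_def)
  then show ?thesis
    by (simp add: norm_axis_1)
qed

definition gram_residual :: "real^'d^'n \<Rightarrow> real^'d \<Rightarrow> real^'d" where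
  "gram_residual U h = h - transpose U *v (U *v h)"

lemma inner_gram_residual: "v \<bullet> gram_residual U h = v \<bullet> h - (U *v v) \<bullet> (U *v h)"
  unfolding gram_residual_def by (simp add: inner_diff_right) (metis dot_lmul_matrix inner_commute)

lemma norm_le_if_norm_sq_le_mult:
  fixes v :: "'a::real_normed_vector"
  assumes "(norm v)\<^sup>2 \<le> norm v * C" "0 \<le> C"
  shows "norm v \<le> C"
  using assms by (cases "norm v = 0") (auto simp: power2_eq_square)

lemma norm_restrict_gram_residual_sq:
  "(norm (restrict_vec Q (gram_residual U h)))\<^sup>2
     = restrict_vec Q (gram_residual U h) \<bullet> h - (U *v restrict_vec Q (gram_residual U h)) \<bullet> (U *v h)"
  by (simp add: inner_restrict_vec_self[symmetric] inner_gram_residual)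

lemma norm_restrict_gram_residual_le_rip:
  assumes "card (W \<union> supp h) \<le> k"
  shows "norm (restrict_vec W (gram_residual U h)) \<le> rip_const U k * norm h"
proof (rule norm_le_if_norm_sq_le_mult)
  let ?v = "restrict_vec W (gram_residual U h)"
  have "supp ?v \<subseteq> W \<union> supp h"
    using supp_restrict_vec by blast
  then have "\<bar>?v \<bullet> h - (U *v ?v) \<bullet> (U *v h)\<bar> \<le> rip_const U k * norm ?v * norm h"
    using assms by (intro rip_const_inner) auto
  then show "(norm ?v)\<^sup>2 \<le> norm ?v * (rip_const U k * norm h)"
    unfolding norm_restrict_gram_residual_sq by (simp add: mult_ac)
  show "0 \<le> rip_const U k * norm h"
    by (simp add: rip_const_nonneg)
qed

lemma norm_restrict_gram_residual_le_parts:
  fixes U :: "real^'d^'n"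
  assumes "1 \<le> s" "2 \<le> CARD('d)"
    and "card Q \<le> s" "card A \<le> s" "card B \<le> s" "Q \<inter> A = {}" "Q \<inter> B = {}"
    and "supp c \<subseteq> Q" "supp a \<subseteq> A" "supp b \<subseteq> B"
  shows "norm (restrict_vec Q (gram_residual U (c + a + b)))
           \<le> rip_const U s * norm c + roc_const U s * (norm a + norm b)"
proof (rule norm_le_if_norm_sq_le_mult)
  let ?v = "restrict_vec Q (gram_residual U (c + a + b))"
  have sv: "supp ?v \<subseteq> Q"
    using supp_restrict_vec by blast
  then have "?v \<bullet> a = 0" "?v \<bullet> b = 0"
    using assms by (auto intro!: inner_eq_zero_if_disjoint_supp)
  then have "(norm ?v)\<^sup>2 = (?v \<bullet> c - (U *v ?v) \<bullet> (U *v c)) - (U *v ?v) \<bullet> (U *v a) - (U *v ?v) \<bullet> (U *v b)"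
    unfolding norm_restrict_gram_residual_sq
    by (simp add: inner_add_right matrix_vector_right_distrib)
  moreover have "\<bar>?v \<bullet> c - (U *v ?v) \<bullet> (U *v c)\<bar> \<le> rip_const U s * norm ?v * norm c"
    using assms sv by (intro rip_const_inner) auto
  moreover have "\<bar>(U *v ?v) \<bullet> (U *v a)\<bar> \<le> roc_const U s * norm ?v * norm a"
    using assms sv by (intro roc_const_inner) auto
  moreover have "\<bar>(U *v ?v) \<bullet> (U *v b)\<bar> \<le> roc_const U s * norm ?v * norm b"
    using assms sv by (intro roc_const_inner) auto
  ultimately show "(norm ?v)\<^sup>2 \<le> norm ?v * (rip_const U s * norm c + roc_const U s * (norm a + norm b))"
    by (simp add: algebra_simps abs_le_iff)
  show "0 \<le> rip_const U s * norm c + roc_const U s * (norm a + norm b)"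
    using rip_const_nonneg[of U s] roc_const_nonneg[OF assms(1,2), of U] by simp
qed

lemma add_le_sqrt2_mult:
  fixes a b H :: real
  assumes "0 \<le> a" "0 \<le> b" "a\<^sup>2 + b\<^sup>2 \<le> H\<^sup>2" "0 \<le> H"
  shows "a + b \<le> sqrt 2 * H"
proof -
  have "(a + b)\<^sup>2 \<le> 2 * H\<^sup>2"
    using assms(3) zero_le_power2[of "a - b"] by (simp add: power2_sum power2_diff)
  then have "a + b \<le> sqrt (2 * H\<^sup>2)"
    by (simp add: real_le_rsqrt)
  then show ?thesis
    using assms(4) by (simp add: real_sqrt_mult)
qed

lemma norm_restrict_gram_residual_le:
  fixes U :: "real^'d^'n"
  assumes "1 \<le> s" "2 \<le> CARD('d)"
    and "card Q \<le> s" "card A \<le> s" "Q \<inter> A = {}" "card (supp h - A) \<le> s"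
  shows "norm (restrict_vec Q (gram_residual U h)) \<le> (rip_const U s + sqrt 2 * roc_const U s) * norm h"
proof -
  define c where "c = restrict_vec Q h"
  define a where "a = restrict_vec A h"
  define b where "b = restrict_vec (- (Q \<union> A)) h"
  have h: "h = c + a + b"
    using assms(5) by (auto simp: c_def a_def b_def vec_eq_iff)
  have sb: "supp b \<subseteq> supp h - A - Q"
    using supp_restrict_vec unfolding b_def by blast
  have "card (supp h - A - Q) \<le> s"
    using assms(6) by (meson Diff_subset card_mono finite order_trans)
  have "norm (restrict_vec Q (gram_residual U h)) \<le> rip_const U s * norm c + roc_const U s * (norm a + norm b)"
    unfolding h using assms sb \<open>card (supp h - A - Q) \<le> s\<close>
      supp_restrict_vec[of Q h] supp_restrict_vec[of A h]
    by (intro norm_restrict_gram_residual_le_parts) (auto simp: c_def a_def)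
  also have "\<dots> \<le> rip_const U s * norm h + roc_const U s * (sqrt 2 * norm h)"
  proof (intro add_mono mult_left_mono add_le_sqrt2_mult)
    have "(norm c)\<^sup>2 + (norm a)\<^sup>2 + (norm b)\<^sup>2 = (\<Sum>i\<in>UNIV. (c $ i)\<^sup>2 + (a $ i)\<^sup>2 + (b $ i)\<^sup>2)"
      by (simp add: power2_norm_vec_eq_sum sum.distrib)
    also have "\<dots> = (\<Sum>i\<in>UNIV. (h $ i)\<^sup>2)"
      using assms(5) by (intro sum.cong) (auto simp: c_def a_def b_def)
    also have "\<dots> = (norm h)\<^sup>2"
      by (simp add: power2_norm_vec_eq_sum)
    finally have "(norm c)\<^sup>2 \<le> (norm h)\<^sup>2" "(norm a)\<^sup>2 + (norm b)\<^sup>2 \<le> (norm h)\<^sup>2"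
      using zero_le_power2[of "norm c"] zero_le_power2[of "norm a"] zero_le_power2[of "norm b"]
      by linarith+
    then show "norm c \<le> norm h" "(norm a)\<^sup>2 + (norm b)\<^sup>2 \<le> (norm h)\<^sup>2"
      by (auto intro: power2_le_imp_le)
  qed (use assms in \<open>auto simp: rip_const_nonneg roc_const_nonneg\<close>)
  finally show ?thesis
    by (simp add: algebra_simps)
qed

lemma card_le_if_norm_restrict_vec_le:
  assumes "1 \<le> s" "0 \<le> \<tau>" "\<And>i. i \<in> P \<Longrightarrow> \<tau> < \<bar>g $ i\<bar>"
    and "\<And>Q. Q \<subseteq> P \<Longrightarrow> card Q = s \<Longrightarrow> norm (restrict_vec Q g) \<le> \<tau> * sqrt s"
  shows "card P \<le> s"
proof (rule ccontr)
  assume "\<not> card P \<le> s"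
  then obtain Q where Q: "Q \<subseteq> P" "card Q = s"
    by (meson nat_le_linear obtain_subset_with_card_n)
  then have "Q \<noteq> {}"
    using assms(1) by auto
  moreover have "\<tau>\<^sup>2 < (g $ i)\<^sup>2" if "i \<in> Q" for i
    using assms(2,3) Q(1) that by (metis abs_of_nonneg power2_abs power_strict_mono subsetD zero_less_numeral)
  ultimately have "(\<Sum>i\<in>Q. \<tau>\<^sup>2) < (\<Sum>i\<in>Q. (g $ i)\<^sup>2)"
    by (intro sum_strict_mono) auto
  also have "\<dots> \<le> (\<tau> * sqrt s)\<^sup>2"
    unfolding norm_restrict_vec_sq[symmetric] using assms(2) assms(4)[OF Q] by (simp add: power_mono)
  finally show False
    using Q(2) by (simp add: power_mult_distrib)
qed

lemma soft_thresh_nth [simp]: "soft_thresh v l $ i = sgn (v $ i) * max (\<bar>v $ i\<bar> - l) 0"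
  by (simp add: soft_thresh_def)

lemma abs_soft_thresh_scalar: "0 \<le> l \<Longrightarrow> \<bar>sgn a * max (\<bar>a\<bar> - l) 0\<bar> = max (\<bar>a\<bar> - l) 0"
  for a l :: real
  by (auto simp: max_def sgn_if abs_mult)

lemma abs_sub_soft_thresh_scalar_le: "0 \<le> l \<Longrightarrow> \<bar>a - sgn a * max (\<bar>a\<bar> - l) 0\<bar> \<le> l"
  for a l :: real
  by (cases "a > 0"; cases "a < 0") (auto simp: max_def sgn_if)

lemma soft_thresh_new_support:
  assumes "0 \<le> \<tau>" "\<bar>ev $ i\<bar> \<le> E" "i \<in> supp (soft_thresh (z + g + ev) (\<tau> + E)) - supp z"
  shows "\<tau> < \<bar>g $ i\<bar>"
proof -
  have "z $ i = 0" "\<tau> + E < \<bar>g $ i + ev $ i\<bar>"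
    using assms(3) by (auto simp: supp_def max_def split: if_splits)
  then show ?thesis
    using assms(2) abs_triangle_ineq[of "g $ i" "ev $ i"] by linarith
qed

lemma abs_soft_thresh_sub_nth_le:
  fixes z g ev :: "real^'d"
  assumes "0 \<le> \<tau>" "0 \<le> E" "\<bar>ev $ i\<bar> \<le> E"
  defines "x' \<equiv> soft_thresh (z + g + ev) (\<tau> + E)"
  shows "\<bar>(x' - z) $ i\<bar> \<le> \<bar>restrict_vec (supp z \<union> supp x') g $ i\<bar> + (if i \<in> supp z then \<tau> + 2 * E else 0)"
proof -
  let ?a = "z $ i + g $ i + ev $ i"
  have x': "x' $ i = sgn ?a * max (\<bar>?a\<bar> - (\<tau> + E)) 0"
    unfolding x'_def by simp
  have ge: "\<bar>g $ i + ev $ i\<bar> \<le> \<bar>g $ i\<bar> + E"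
    using assms(3) abs_triangle_ineq[of "g $ i" "ev $ i"] by linarith
  consider "i \<in> supp z" | "i \<notin> supp z" "i \<in> supp x'" | "i \<notin> supp z" "i \<notin> supp x'"
    by blast
  then show ?thesis
  proof cases
    case 1
    have "\<bar>?a - x' $ i\<bar> \<le> \<tau> + E"
      unfolding x' using assms(1,2) by (intro abs_sub_soft_thresh_scalar_le) simp
    then show ?thesis
      using 1 ge by simp
  next
    case 2
    then have "z $ i = 0"
      by (simp add: supp_def)
    then have "\<bar>x' $ i\<bar> = max (\<bar>g $ i + ev $ i\<bar> - (\<tau> + E)) 0"
      unfolding x' using assms(1,2) by (simp add: abs_soft_thresh_scalar)
    then show ?thesis
      using 2 ge assms(1) \<open>z $ i = 0\<close> by simp
  next
    case 3
    then show ?thesis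
      by (simp add: supp_def)
  qed
qed

lemma norm_soft_thresh_sub_le:
  fixes z g ev :: "real^'d"
  assumes "0 \<le> \<tau>" "0 \<le> E" "\<And>i. \<bar>ev $ i\<bar> \<le> E"
  defines "x' \<equiv> soft_thresh (z + g + ev) (\<tau> + E)"
  shows "norm (x' - z) \<le> norm (restrict_vec (supp z \<union> supp x') g) + (\<tau> + 2 * E) * sqrt (card (supp z))"
proof -
  let ?g = "restrict_vec (supp z \<union> supp x') g"
  let ?c = "restrict_vec (supp z) (\<chi> i. \<tau> + 2 * E)"
  have "norm (x' - z) \<le> norm ((\<chi> i. \<bar>?g $ i\<bar>) + ?c)"
  proof (rule norm_le_componentwise_cart)
    fix i
    have "\<bar>(x' - z) $ i\<bar> \<le> \<bar>?g $ i\<bar> + (if i \<in> supp z then \<tau> + 2 * E else 0)"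
      unfolding x'_def by (rule abs_soft_thresh_sub_nth_le[OF assms(1,2,3)])
    moreover have "((\<chi> i. \<bar>?g $ i\<bar>) + ?c) $ i = \<bar>?g $ i\<bar> + (if i \<in> supp z then \<tau> + 2 * E else 0)"
      by simp
    ultimately show "norm ((x' - z) $ i) \<le> norm (((\<chi> i. \<bar>?g $ i\<bar>) + ?c) $ i)"
      by simp
  qed
  also have "\<dots> \<le> norm (\<chi> i. \<bar>?g $ i\<bar>) + norm ?c"
    by (rule norm_triangle_ineq)
  also have "norm (\<chi> i. \<bar>?g $ i\<bar>) \<le> norm ?g"
    by (rule norm_le_componentwise_cart) simp
  finally show ?thesis
    using assms(1,2) by (simp add: norm_restrict_vec_const)
qed

lemma soft_thresholding_step:
  fixes U :: "real^'d^'n" and xs x :: "real^'d" and e :: "real^'n" and c E :: real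
  assumes s: "1 \<le> s" "2 * s \<le> CARD('d)"
    and sparse: "card (supp xs) \<le> s" and x_sparse: "card (supp x - supp xs) \<le> s"
    and dist: "norm (x - xs) \<le> D"
    and c_def: "c = rip_const U s + sqrt 2 * roc_const U s"
    and E_def: "E = linf (transpose U *v e)"
  defines "x' \<equiv> soft_thresh (x - transpose U *v (U *v x - (U *v xs + e))) (c / sqrt s * D + E)"
  shows "card (supp x' - supp xs) \<le> s"
    and "norm (x' - xs) \<le> (c + rip_const U (3 * s)) * D + 2 * sqrt s * E"
proof -
  define h where "h = x - xs"
  define \<tau> where "\<tau> = c / sqrt s * D"
  have "x - transpose U *v (U *v x - (U *v xs + e)) = xs + gram_residual U h + transpose U *v e"
    unfolding h_def gram_residual_def
    by (simp add: matrix_vector_mult_diff_distrib matrix_vector_right_distrib algebra_simps)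
  then have x': "x' = soft_thresh (xs + gram_residual U h + transpose U *v e) (\<tau> + E)"
    unfolding x'_def \<tau>_def by simp
  have ev: "\<And>i. \<bar>(transpose U *v e) $ i\<bar> \<le> E"
    unfolding E_def by (rule abs_nth_le_linf)
  then have E0: "0 \<le> E"
    by (meson abs_ge_zero order_trans)
  have c0: "0 \<le> c"
    unfolding c_def using s rip_const_nonneg[of U s] roc_const_nonneg[of s, where U = U] by simp
  have hD: "norm h \<le> D" and D0: "0 \<le> D"
    using dist norm_ge_zero[of h] unfolding h_def by linarith+
  have \<tau>0: "0 \<le> \<tau>"
    unfolding \<tau>_def using c0 D0 by simp
  have cD: "c * D = \<tau> * sqrt s"
    unfolding \<tau>_def using s(1) by simp
  show support: "card (supp x' - supp xs) \<le> s"
  proof (rule card_le_if_norm_restrict_vec_le[OF s(1) \<tau>0])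
    fix i assume "i \<in> supp x' - supp xs"
    then show "\<tau> < \<bar>gram_residual U h $ i\<bar>"
      unfolding x' by (rule soft_thresh_new_support[OF \<tau>0 ev])
  next
    fix Q assume Q: "Q \<subseteq> supp x' - supp xs" "card Q = s"
    have "supp h - supp xs \<subseteq> supp x - supp xs"
      by (auto simp: h_def supp_def)
    then have "card (supp h - supp xs) \<le> s"
      using card_mono[OF finite] x_sparse le_trans by blast
    then have "norm (restrict_vec Q (gram_residual U h)) \<le> c * norm h"
      unfolding c_def using s Q sparse by (intro norm_restrict_gram_residual_le) auto
    also have "\<dots> \<le> \<tau> * sqrt s"
      using mult_left_mono[OF hD c0] unfolding cD .
    finally show "norm (restrict_vec Q (gram_residual U h)) \<le> \<tau> * sqrt s" .
  qed
  have "card (supp xs \<union> supp x' \<union> supp h) \<le> card (supp xs \<union> (supp x' - supp xs) \<union> (supp x - supp xs))"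
    by (rule card_mono) (auto simp: h_def supp_def)
  also have "\<dots> \<le> card (supp xs) + card (supp x' - supp xs) + card (supp x - supp xs)"
    by (intro order_trans[OF card_Un_le] add_right_mono card_Un_le)
  also have "\<dots> \<le> 3 * s"
    using sparse support x_sparse by linarith
  finally have "norm (restrict_vec (supp xs \<union> supp x') (gram_residual U h)) \<le> rip_const U (3 * s) * norm h"
    by (rule norm_restrict_gram_residual_le_rip)
  also have "\<dots> \<le> rip_const U (3 * s) * D"
    by (rule mult_left_mono[OF hD rip_const_nonneg])
  finally have restricted: "norm (restrict_vec (supp xs \<union> supp x') (gram_residual U h)) \<le> rip_const U (3 * s) * D" .
  have "(\<tau> + 2 * E) * sqrt (card (supp xs)) \<le> (\<tau> + 2 * E) * sqrt s"
    using sparse \<tau>0 E0 by (intro mult_left_mono) auto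
  also have "\<dots> = c * D + 2 * sqrt s * E"
    using cD by (simp add: algebra_simps)
  finally have "(\<tau> + 2 * E) * sqrt (card (supp xs)) \<le> c * D + 2 * sqrt s * E" .
  moreover have "norm (x' - xs) \<le> norm (restrict_vec (supp xs \<union> supp x') (gram_residual U h))
      + (\<tau> + 2 * E) * sqrt (card (supp xs))"
    unfolding x' by (rule norm_soft_thresh_sub_le[OF \<tau>0 E0 ev])
  ultimately show "norm (x' - xs) \<le> (c + rip_const U (3 * s)) * D + 2 * sqrt s * E"
    using restricted by (simp add: algebra_simps)
qed

lemma affine_recurrence_closed_form:
  fixes \<Delta> :: "nat \<Rightarrow> real"
  assumes "\<gamma> \<noteq> 1" and rec: "\<forall>t\<ge>1. \<Delta> (t + 1) = \<gamma> * \<Delta> t + K"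
  shows "\<Delta> (t + 1) = \<gamma> ^ t * \<Delta> 1 + (1 - \<gamma> ^ t) / (1 - \<gamma>) * K"
proof (induction t)
  case (Suc t)
  have "\<Delta> (Suc t + 1) = \<gamma> * (\<gamma> ^ t * \<Delta> 1 + (1 - \<gamma> ^ t) / (1 - \<gamma>) * K) + K"
    using rec[rule_format, of "Suc t"] unfolding Suc.IH[symmetric] by simp
  also have "\<dots> = \<gamma> ^ Suc t * \<Delta> 1 + (1 - \<gamma> ^ Suc t) / (1 - \<gamma>) * K"
    using assms(1) by (simp add: field_simps)
  finally show ?case .
qed simp

theorem theorem2:
  fixes U :: "real^'d^'n" and xstar :: "real^'d" and e y :: "real^'n"
    and s :: nat and x :: "nat \<Rightarrow> real^'d" and \<Delta> lam :: "nat \<Rightarrow> real" and \<gamma> :: real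
  assumes s_pos: "1 \<le> s" and s_d: "2 * s \<le> CARD('d)"
    and sparse: "card (supp xstar) \<le> s"
    and y_def: "y = U *v xstar + e"
    and gamma_def: "\<gamma> = rip_const U s + sqrt 2 * roc_const U s + rip_const U (3 * s)"
    and gamma_lt: "\<gamma> < 1"
    and Delta1: "norm (x 1 - xstar) \<le> \<Delta> 1"
    and Delta_rec: "\<forall>t\<ge>1. \<Delta> (t + 1) = \<gamma> * \<Delta> t + (1 + sqrt 2) * sqrt (real s) * linf (transpose U *v e)"
    and lambda_def: "\<forall>t\<ge>1. lam t = (rip_const U s + sqrt 2 * roc_const U s) / sqrt (real s) * \<Delta> t
                                 + linf (transpose U *v e)"
    and x1: "x 1 = 0"
    and x_rec: "\<forall>t\<ge>1. x (t + 1) = soft_thresh (x t - transpose U *v (U *v x t - y)) (lam t)"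
  shows "\<forall>t::nat. card (supp (x (t + 1)) - supp xstar) \<le> s \<and>
           norm (x (t + 1) - xstar) \<le> \<gamma> ^ t * \<Delta> 1
             + (1 - \<gamma> ^ t) / (1 - \<gamma>) * (1 + sqrt 2) * sqrt (real s) * linf (transpose U *v e)"
proof -
  let ?E = "linf (transpose U *v e)"
  have E0: "0 \<le> ?E"
    by (meson abs_ge_zero abs_nth_le_linf order_trans)
  have iterate: "card (supp (x (t + 1)) - supp xstar) \<le> s \<and> norm (x (t + 1) - xstar) \<le> \<Delta> (t + 1)" for t
  proof (induction t)
    case (Suc t)
    let ?c = "rip_const U s + sqrt 2 * roc_const U s"
    have "x (Suc t + 1) = soft_thresh (x (t + 1) - transpose U *v (U *v x (t + 1) - (U *v xstar + e)))
      (?c / sqrt s * \<Delta> (t + 1) + ?E)"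
      using x_rec lambda_def y_def by simp
    then have "card (supp (x (Suc t + 1)) - supp xstar) \<le> s"
      and "norm (x (Suc t + 1) - xstar) \<le> (?c + rip_const U (3 * s)) * \<Delta> (t + 1) + 2 * sqrt s * ?E"
      using soft_thresholding_step[OF s_pos s_d sparse Suc.IH[THEN conjunct1] Suc.IH[THEN conjunct2] refl refl]
      by simp_all
    moreover have "\<Delta> (Suc t + 1) = \<gamma> * \<Delta> (t + 1) + (1 + sqrt 2) * sqrt s * ?E"
      using Delta_rec by simp
    moreover have "2 * sqrt s * ?E \<le> (1 + sqrt 2) * sqrt s * ?E"
      using E0 by (intro mult_right_mono) auto
    ultimately show ?case
      unfolding gamma_def by linarith
  qed (use x1 Delta1 in simp)
  show ?thesis
  proof (intro allI conjI)
    fix t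
    show "card (supp (x (t + 1)) - supp xstar) \<le> s"
      using iterate by blast
    have "norm (x (t + 1) - xstar) \<le> \<Delta> (t + 1)"
      using iterate by blast
    also have "\<Delta> (t + 1) = \<gamma> ^ t * \<Delta> 1 + (1 - \<gamma> ^ t) / (1 - \<gamma>) * ((1 + sqrt 2) * sqrt s * ?E)"
      using gamma_lt Delta_rec by (intro affine_recurrence_closed_form) auto
    finally show "norm (x (t + 1) - xstar) \<le> \<gamma> ^ t * \<Delta> 1
        + (1 - \<gamma> ^ t) / (1 - \<gamma>) * (1 + sqrt 2) * sqrt (real s) * ?E"
      by (simp only: mult.assoc)
  qed
qed

end
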